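(* Let $p\equiv 1\pmod 8$ be a prime, and suppose there is a primitive root $a$ of $\mathbb{F}_p^*$ such that $a(a^2-a+1)\in(\mathbb{F}_p^* )^4=\{x^4:x\in\mathbb{F}_p^*\}$. Let $K_{p+1}$ be the complete graph on vertex set $\mathbb{F}_p\cup\{c\}$, where $c\notin\mathbb{F}_p$ is an extra vertex. Regard $0$ and the nonzero squares of $\mathbb{F}_p$ as "quadratic residues", and $c$ and the non-squares of $\mathbb{F}_p^*$ as "quadratic non-residues". Then there exists a $1$-factor $F$ of $K_{p+1}$ such that (1) each edge of $F$ joins a quadratic residue and a quadratic non-residue, and (2) the lengths of the edges of $F$ are pairwise distinct.
   Context: A $1$-factor is a perfect matching. For $x\neq y$ in $\mathbb{F}_p$, the length of the edge $\{x,y\}$ is $\ell(x,y)=\{x-y,y-x\}\subset\mathbb{F}_p^*$; every edge $\{c,x\}$ with $x\in\mathbb{F}_p$ is assigned length $\infty$, distinct from all subsets of $\mathbb{F}_p^*$. "Pairwise distinct lengths" means no two distinct edges of $F$ have the same length. *)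

theory Defs
  imports "HOL-Number_Theory.Number_Theory"
begin

text \<open>Vertices of K_{p+1}: Some x for x in F_p (represented by 0..p-1), None for the extra vertex c.\<close>

definition kverts :: "nat \<Rightarrow> nat option set" where
  "kverts p = insert None (Some ` {0..<p})"

definition is_one_factor :: "nat \<Rightarrow> nat option set set \<Rightarrow> bool" where
  "is_one_factor p F \<longleftrightarrow>
     (\<forall>e\<in>F. \<exists>u v. u \<noteq> v \<and> u \<in> kverts p \<and> v \<in> kverts p \<and> e = {u, v}) \<and>
     (\<forall>v\<in>kverts p. \<exists>!e. e \<in> F \<and> v \<in> e)"

definition qres :: "nat \<Rightarrow> nat option \<Rightarrow> bool" where
  "qres p v = (case v of None \<Rightarrow> False | Some x \<Rightarrow> QuadRes (int p) (int x))"

text \<open>Length of an edge: None stands for \<infinity> (edges through c); otherwise Some {x-y, y-x} (mod p).\<close>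
definition edge_len :: "nat \<Rightarrow> nat option set \<Rightarrow> nat set option" where
  "edge_len p e = (if None \<in> e then None
     else Some {d. \<exists>x y. Some x \<in> e \<and> Some y \<in> e \<and> x \<noteq> y \<and> d = (x + p - y) mod p})"

end

theory Submission
  imports Defs
begin

(* Write p - 1 = 2n with 4 dvd n, so that a^n = -1 for the primitive root a. Besides the edge
   from 0 to the extra vertex, join each residue a^k (k even) to the non-residue a^(j k), where
   j = partner_exp n maps the even exponents bijectively onto the odd ones and is chosen so that
   a^(j k) = -a^t with t = k + 1, k + 3 or k - 1. The differences are then (a + 1) a^k,
   (a + 1) a^k (a^2 - a + 1) and (a + 1) a^(k - 1); by hypothesis a^2 - a + 1 = a^c with
   c = 3 (mod 4), so every difference is (a + 1) a^(e k) with e = diff_exp n c, and e k mod 4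
   records which of the three kinds of edge k is. Equal lengths mean e k = e k' (mod n); as
   4 dvd n the kinds agree, and within one kind e k - k is constant, so k = k'. *)

section \<open>One-factors built from a pairing of the nonzero residues\<close>

definition pair_factor :: "('i \<Rightarrow> nat) \<Rightarrow> ('i \<Rightarrow> nat) \<Rightarrow> 'i set \<Rightarrow> nat option set set" where
  "pair_factor u v I = insert {Some 0, None} ((\<lambda>i. {Some (u i), Some (v i)}) ` I)"

lemma is_one_factor_pair_factor:
  assumes "0 < p" and u_inj: "inj_on u I" and v_inj: "inj_on v I"
    and disj: "u ` I \<inter> v ` I = {}" and cover: "u ` I \<union> v ` I = {1..<p}"
  shows "is_one_factor p (pair_factor u v I)"
  unfolding is_one_factor_def
proof (intro conjI ballI)
  fix e assume "e \<in> pair_factor u v I"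
  then consider "e = {Some 0, None}" | i where "i \<in> I" "e = {Some (u i), Some (v i)}"
    unfolding pair_factor_def by blast
  then show "\<exists>x y. x \<noteq> y \<and> x \<in> kverts p \<and> y \<in> kverts p \<and> e = {x, y}"
  proof cases
    case 1
    then show ?thesis using \<open>0 < p\<close>
      by (intro exI[of _ "Some 0"] exI[of _ None]) (simp add: kverts_def)
  next
    case 2
    then have "u i \<noteq> v i" "u i < p" "v i < p" using disj cover by auto
    then show ?thesis using 2
      by (intro exI[of _ "Some (u i)"] exI[of _ "Some (v i)"]) (simp add: kverts_def)
  qed
next
  fix w assume "w \<in> kverts p"
  show "\<exists>!e. e \<in> pair_factor u v I \<and> w \<in> e"
  proof (cases "w \<in> {Some 0, None}")
    case True
    have "w \<notin> {Some (u i), Some (v i)}" if "i \<in> I" for i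
      using True that cover by fastforce
    then show ?thesis using True unfolding pair_factor_def
      by (intro ex1I[of _ "{Some 0, None}"]) blast+
  next
    case False
    then obtain x where x: "w = Some x" "x \<in> u ` I \<union> v ` I"
      using \<open>w \<in> kverts p\<close> cover by (auto simp: kverts_def)
    then obtain i where i: "i \<in> I" "x = u i \<or> x = v i" by blast
    have unique: "i' = i" if "i' \<in> I" "x = u i' \<or> x = v i'" for i'
      using i that disj u_inj v_inj by (metis IntI empty_iff image_eqI inj_onD)
    show ?thesis
    proof (rule ex1I[of _ "{Some (u i), Some (v i)}"])
      show "{Some (u i), Some (v i)} \<in> pair_factor u v I \<and> w \<in> {Some (u i), Some (v i)}"
        using i x unfolding pair_factor_def by auto
    next
      fix e assume e: "e \<in> pair_factor u v I \<and> w \<in> e"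
      then obtain i' where "i' \<in> I" "e = {Some (u i'), Some (v i')}"
        using False unfolding pair_factor_def by auto
      then show "e = {Some (u i), Some (v i)}" using e x unique by auto
    qed
  qed
qed

lemma pair_factor_joins_residues:
  assumes "\<And>i. i \<in> I \<Longrightarrow> qres p (Some (u i)) \<and> \<not> qres p (Some (v i))"
  shows "\<forall>e \<in> pair_factor u v I. \<exists>x y. e = {x, y} \<and> qres p x \<and> \<not> qres p y"
proof
  fix e assume "e \<in> pair_factor u v I"
  then consider "e = {Some 0, None}" | i where "i \<in> I" "e = {Some (u i), Some (v i)}"
    unfolding pair_factor_def by blast
  then show "\<exists>x y. e = {x, y} \<and> qres p x \<and> \<not> qres p y"
  proof cases
    case 1
    have "QuadRes (int p) 0"
      unfolding QuadRes_def by (metis cong_refl power_zero_numeral)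
    then show ?thesis
      using 1 by (intro exI[of _ "Some 0"] exI[of _ None]) (simp add: qres_def)
  next
    case 2
    then show ?thesis using assms by blast
  qed
qed

lemma edge_len_pair:
  assumes "x \<noteq> y"
  shows "edge_len p {Some x, Some y} = Some {(x + p - y) mod p, (y + p - x) mod p}"
  using assms unfolding edge_len_def by auto

lemma edge_len_pair_eq_imp_cong:
  assumes "x < p" "y < p" "x' < p" "y' < p" "x \<noteq> y" "x' \<noteq> y'"
    and "edge_len p {Some x, Some y} = edge_len p {Some x', Some y'}"
  shows "[int x - int y = int x' - int y'] (mod int p) \<or> [int x - int y = - (int x' - int y')] (mod int p)"
proof -
  have diff_mod: "int ((s + p - t) mod p) = (int s - int t) mod int p" if "t < p" for s t
  proof -
    have "int (s + p - t) = (int s - int t) + int p" using that by simp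
    then show ?thesis by (simp add: of_nat_mod)
  qed
  have "(x + p - y) mod p \<in> {(x' + p - y') mod p, (y' + p - x') mod p}"
    using assms edge_len_pair by (metis insertI1 option.inject)
  then have "(int x - int y) mod int p \<in> {(int x' - int y') mod int p, (int y' - int x') mod int p}"
    using assms(1-4) diff_mod by (metis insert_iff singleton_iff)
  then show ?thesis by (auto simp: cong_def)
qed

lemma inj_on_edge_len_pair_factor:
  assumes range: "\<And>i. i \<in> I \<Longrightarrow> u i < p \<and> v i < p \<and> u i \<noteq> v i"
    and diff: "\<And>i. i \<in> I \<Longrightarrow> [int (u i) - int (v i) = w i] (mod int p)"
    and distinct: "\<And>i j. i \<in> I \<Longrightarrow> j \<in> I \<Longrightarrow>
      [w i = w j] (mod int p) \<or> [w i = - w j] (mod int p) \<Longrightarrow> i = j"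
  shows "inj_on (edge_len p) (pair_factor u v I)"
proof (rule inj_onI)
  fix e e' assume e: "e \<in> pair_factor u v I" and e': "e' \<in> pair_factor u v I"
    and eq: "edge_len p e = edge_len p e'"
  have len_0c: "edge_len p {Some 0, None} = None"
    by (simp add: edge_len_def)
  have len_pair: "edge_len p {Some (u i), Some (v i)} \<noteq> None" if "i \<in> I" for i
    using range[OF that] by (simp add: edge_len_pair)
  show "e = e'"
  proof (cases "e = {Some 0, None}")
    case True
    then show ?thesis
      using e' eq len_0c len_pair unfolding pair_factor_def by fastforce
  next
    case False
    then obtain i where i: "i \<in> I" "e = {Some (u i), Some (v i)}"
      using e unfolding pair_factor_def by blast
    then have "e' \<noteq> {Some 0, None}"
      using eq len_0c len_pair by metis
    then obtain j where j: "j \<in> I" "e' = {Some (u j), Some (v j)}"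
      using e' unfolding pair_factor_def by blast
    have "[int (u i) - int (v i) = int (u j) - int (v j)] (mod int p) \<or>
      [int (u i) - int (v i) = - (int (u j) - int (v j))] (mod int p)"
      using edge_len_pair_eq_imp_cong range i j eq by metis
    moreover have "[- (int (u j) - int (v j)) = - w j] (mod int p)"
      using diff[OF j(1)] by (simp only: cong_minus_minus_iff)
    ultimately have "[w i = w j] (mod int p) \<or> [w i = - w j] (mod int p)"
      using diff[OF i(1)] diff[OF j(1)] by (meson cong_sym cong_trans)
    then have "i = j"
      using distinct i(1) j(1) by blast
    then show ?thesis using i j by simp
  qed
qed

section \<open>Powers of a primitive root modulo a prime\<close>

lemma QuadRes_cong: "[x = y] (mod m) \<Longrightarrow> QuadRes m x \<longleftrightarrow> QuadRes m y"
  unfolding QuadRes_def by (meson cong_sym cong_trans)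

locale primroot_mod_prime =
  fixes p a :: nat
  assumes prime: "prime p" and primroot: "residue_primroot p a"
begin

lemma coprime_modulus_primroot: "coprime p a"
  using primroot by (simp add: residue_primroot_def)

lemma pow_cong_iff: "[int a ^ i = int a ^ j] (mod int p) \<longleftrightarrow> [i = j] (mod (p - 1))"
proof -
  have "ord p a = p - 1"
    using primroot prime by (simp add: residue_primroot_def totient_prime)
  then show ?thesis
    using order_divides_expdiff[OF coprime_modulus_primroot] by (metis cong_int_iff of_nat_power)
qed

lemma bij_betw_pow_mod: "bij_betw (\<lambda>i. a ^ i mod p) {..<p - 1} {1..<p}"
proof -
  have "{0<..<p} = {1..<p}" by auto
  then show ?thesis
    using residue_primroot_is_generator[OF prime_gt_1_nat[OF prime] primroot] prime
    by (simp add: totient_prime totatives_prime)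
qed

lemma cong_pow_of_not_dvd:
  assumes "\<not> int p dvd x"
  obtains i where "i < p - 1" "[x = int a ^ i] (mod int p)"
proof -
  have "0 \<le> x mod int p" "x mod int p < int p" "x mod int p \<noteq> 0"
    using assms prime_gt_0_nat[OF prime] by auto
  then have "nat (x mod int p) \<in> (\<lambda>i. a ^ i mod p) ` {..<p - 1}"
    using bij_betw_imp_surj_on[OF bij_betw_pow_mod] by auto
  then obtain i where "i < p - 1" "a ^ i mod p = nat (x mod int p)" by auto
  then have "int a ^ i mod int p = x mod int p"
    using prime_gt_0_nat[OF prime] by (metis int_nat_eq of_nat_mod of_nat_power pos_mod_sign of_nat_0_less_iff)
  then show ?thesis using \<open>i < p - 1\<close> that by (simp add: cong_def)
qed

lemma pow_half_cong_minus_one: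
  assumes "odd p"
  shows "[int a ^ ((p - 1) div 2) = - 1] (mod int p)"
proof -
  define n where "n = (p - 1) div 2"
  have n: "p - 1 = 2 * n" "n > 0"
    using assms prime_ge_2_nat[OF prime] unfolding n_def by (auto elim!: oddE)
  have "[int a ^ (2 * n) = int a ^ 0] (mod int p)"
    using pow_cong_iff[of "2 * n" 0] n by (simp add: cong_def)
  moreover have "int a ^ (2 * n) - 1 = (int a ^ n - 1) * (int a ^ n + 1)"
    by (simp add: algebra_simps flip: power_add mult_2)
  ultimately have "int p dvd (int a ^ n - 1) * (int a ^ n + 1)"
    by (simp add: cong_iff_dvd_diff)
  moreover have "\<not> [int a ^ n = int a ^ 0] (mod int p)"
    using pow_cong_iff[of n 0] n by (simp add: cong_def)
  ultimately show ?thesis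
    using prime by (auto simp: prime_dvd_mult_iff cong_iff_dvd_diff n_def)
qed

lemma pow_add_half_cong:
  assumes "odd p"
  shows "[int a ^ (t + (p - 1) div 2) = - (int a ^ t)] (mod int p)"
proof -
  have "[int a ^ t * int a ^ ((p - 1) div 2) = int a ^ t * - 1] (mod int p)"
    by (intro cong_mult cong_refl pow_half_cong_minus_one assms)
  then show ?thesis by (simp add: power_add)
qed

lemma not_dvd_primroot_pow: "\<not> int p dvd int a ^ k"
proof -
  have "\<not> p dvd a"
    using coprime_modulus_primroot prime by (meson coprime_absorb_left not_prime_unit)
  then show ?thesis
    using prime by (metis of_nat_power int_dvd_int_iff prime_dvd_power)
qed

lemma QuadRes_pow_iff:
  assumes "odd p"
  shows "QuadRes (int p) (int a ^ k) \<longleftrightarrow> even k"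
proof
  assume "QuadRes (int p) (int a ^ k)"
  then obtain y where y: "[y ^ 2 = int a ^ k] (mod int p)"
    unfolding QuadRes_def by blast
  have "\<not> int p dvd y"
    using y not_dvd_primroot_pow[of k] prime
    by (metis cong_dvd_iff dvd_mult2 power2_eq_square)
  then obtain i where "[y = int a ^ i] (mod int p)"
    using cong_pow_of_not_dvd by blast
  have "int a ^ (2 * i) = (int a ^ i) ^ 2"
    by (simp add: mult.commute power_mult)
  also have "[\<dots> = y ^ 2] (mod int p)"
    using \<open>[y = int a ^ i] (mod int p)\<close> by (rule cong_pow[OF cong_sym])
  also note y
  finally have "[int a ^ (2 * i) = int a ^ k] (mod int p)" .
  then have "[2 * i = k] (mod (p - 1))"
    using pow_cong_iff by blast
  moreover have "2 dvd p - 1"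
    using assms by simp
  ultimately show "even k"
    by (metis cong_dvd_modulus_nat cong_dvd_iff dvd_triv_left)
next
  assume "even k"
  then obtain h where "k = 2 * h" by blast
  then have "(int a ^ h) ^ 2 = int a ^ k"
    by (simp add: power_mult mult.commute flip: power_mult)
  then show "QuadRes (int p) (int a ^ k)"
    unfolding QuadRes_def by (metis cong_refl)
qed

lemma pow_cong_plus_minus_imp_cong:
  assumes "odd p"
    and "[int a ^ i = int a ^ j] (mod int p) \<or> [int a ^ i = - (int a ^ j)] (mod int p)"
  shows "[i = j] (mod ((p - 1) div 2))"
proof -
  define n where "n = (p - 1) div 2"
  have "p - 1 = n * 2" using assms(1) unfolding n_def by simp
  have "[int a ^ i = int a ^ j] (mod int p) \<or> [int a ^ i = int a ^ (j + n)] (mod int p)"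
    using assms pow_add_half_cong[of j] unfolding n_def by (meson cong_sym cong_trans)
  then have "[i = j] (mod (p - 1)) \<or> [i = j + n] (mod (p - 1))"
    using pow_cong_iff by blast
  then have "[i = j] (mod n) \<or> [i = j + n] (mod n)"
    using \<open>p - 1 = n * 2\<close> by (metis cong_dvd_modulus_nat dvd_triv_left)
  then show ?thesis
    unfolding n_def by (auto simp: cong_def)
qed

lemma coprime_primroot_plus_one:
  assumes "3 < p"
  shows "coprime (int a + 1) (int p)"
proof -
  have "odd p" using prime assms by (simp add: prime_odd_nat)
  have "1 \<noteq> (p - 1) div 2" "1 < p - 1" "(p - 1) div 2 < p - 1"
    using assms \<open>odd p\<close> by (auto elim!: oddE)
  then have "\<not> [int a ^ 1 = int a ^ ((p - 1) div 2)] (mod int p)"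
    unfolding pow_cong_iff using cong_less_modulus_unique_nat by blast
  then have "\<not> int p dvd int a + 1"
    using pow_half_cong_minus_one[OF \<open>odd p\<close>] by (metis cong_iff_dvd_diff cong_sym cong_trans diff_minus_eq_add power_one_right)
  then show ?thesis
    using prime by (simp add: prime_imp_coprime coprime_commute)
qed

lemma pow_3_mod_4_of_fourth_power:
  assumes "\<not> int p dvd x" and "[x ^ 4 = int a * y] (mod int p)"
  obtains c where "c mod 4 = 3" and "[int a ^ c = y] (mod int p)"
proof -
  obtain i where "[x = int a ^ i] (mod int p)"
    using cong_pow_of_not_dvd assms(1) by blast
  have "int a ^ (4 * i) = (int a ^ i) ^ 4"
    by (simp add: mult.commute power_mult)
  also have "[\<dots> = x ^ 4] (mod int p)"
    using \<open>[x = int a ^ i] (mod int p)\<close> by (rule cong_pow[OF cong_sym])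
  also note assms(2)
  finally have "[int a ^ (4 * i) = int a * y] (mod int p)" .
  \<comment> \<open>the summand \<open>4 (p - 1)\<close> leaves \<open>a^(c + 1)\<close> unchanged and keeps \<open>c + 1\<close> positive\<close>
  define c where "c = 4 * i + 4 * (p - 1) - 1"
  have Suc_c: "Suc c = 4 * i + 4 * (p - 1)"
    using prime_gt_1_nat[OF prime] unfolding c_def by simp
  have "[Suc c = 4 * i] (mod (p - 1))"
    unfolding Suc_c by (simp add: cong_def)
  then have "[int a ^ Suc c = int a ^ (4 * i)] (mod int p)"
    by (simp only: pow_cong_iff)
  then have "[int a * int a ^ c = int a * y] (mod int p)"
    using \<open>[int a ^ (4 * i) = int a * y] (mod int p)\<close> by (metis cong_trans power_Suc)
  moreover have "coprime (int a) (int p)"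
    using coprime_modulus_primroot by (simp add: coprime_commute)
  ultimately have "[int a ^ c = y] (mod int p)"
    using cong_mult_lcancel by blast
  moreover have "c mod 4 = 3"
    using Suc_c by presburger
  ultimately show ?thesis using that by blast
qed

end

section \<open>Exponent bookkeeping\<close>

definition partner_exp :: "nat \<Rightarrow> nat \<Rightarrow> nat" where
  "partner_exp n k = (if k < n then k + n + 1 else if 4 dvd k then k - n + 3 else k - n - 1)"

lemma even_below_cases:
  fixes k N :: nat
  assumes "even k" "k < 8 * N"
  obtains i where "k = 2 * i" "i < 2 * N"
    | s where "k = 4 * N + 4 * s" "s < N"
    | s where "k = 4 * N + 4 * s + 2" "s < N" "\<not> 4 dvd k"
proof -
  have "(\<exists>i. k = 2 * i \<and> i < 2 * N) \<or> (\<exists>s. k = 4 * N + 4 * s \<and> s < N)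
    \<or> (\<exists>s. k = 4 * N + 4 * s + 2 \<and> s < N \<and> \<not> 4 dvd k)"
    using assms by presburger
  then show ?thesis using that by blast
qed

lemma odd_below_cases:
  fixes l N :: nat
  assumes "odd l" "l < 8 * N"
  obtains i where "l = 4 * N + 2 * i + 1" "i < 2 * N"
    | s where "l = 4 * s + 3" "s < N" "l mod 4 = 3"
    | s where "l = 4 * s + 1" "s < N" "l mod 4 = 1"
proof -
  have "(\<exists>i. l = 4 * N + 2 * i + 1 \<and> i < 2 * N) \<or> (\<exists>s. l = 4 * s + 3 \<and> s < N \<and> l mod 4 = 3)
    \<or> (\<exists>s. l = 4 * s + 1 \<and> s < N \<and> l mod 4 = 1)"
    using assms by presburger
  then show ?thesis using that by blast
qed

lemma bij_betw_partner_exp: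
  assumes "4 dvd n"
  shows "bij_betw (partner_exp n) {k. k < 2 * n \<and> even k} {l. l < 2 * n \<and> odd l}"
proof (rule bij_betw_byWitness)
  obtain N where n: "n = 4 * N" using assms by blast
  define undo where
    "undo l = (if n < l then l - n - 1 else if l mod 4 = 3 then l + n - 3 else l + n + 1)" for l
  have left_inverse: "undo (partner_exp n k) = k \<and> partner_exp n k < 2 * n \<and> odd (partner_exp n k)"
    if "k < 2 * n" "even k" for k
  proof -
    have "even k" "k < 8 * N" using that n by auto
    then show ?thesis by (cases rule: even_below_cases) (auto simp: undo_def partner_exp_def n)
  qed
  have right_inverse: "partner_exp n (undo l) = l \<and> undo l < 2 * n \<and> even (undo l)"
    if "l < 2 * n" "odd l" for l
  proof -
    have "odd l" "l < 8 * N" using that n by auto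
    moreover have "\<not> 4 dvd 4 * s + 4 * N + 2" for s by presburger
    ultimately show ?thesis
      by (cases rule: odd_below_cases) (auto simp: undo_def partner_exp_def n)
  qed
  show "\<forall>k \<in> {k. k < 2 * n \<and> even k}. undo (partner_exp n k) = k"
    "partner_exp n ` {k. k < 2 * n \<and> even k} \<subseteq> {l. l < 2 * n \<and> odd l}"
    using left_inverse by auto
  show "\<forall>l \<in> {l. l < 2 * n \<and> odd l}. partner_exp n (undo l) = l"
    "undo ` {l. l < 2 * n \<and> odd l} \<subseteq> {k. k < 2 * n \<and> even k}"
    using right_inverse by auto
qed

definition diff_exp :: "nat \<Rightarrow> nat \<Rightarrow> nat \<Rightarrow> nat" where
  "diff_exp n c k = (if k < n then k else if 4 dvd k then k + c else k - 1)"

lemma diff_exp_mod_4: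
  assumes "c mod 4 = 3" and "even k"
  shows "diff_exp n c k mod 4 = (if k < n then k mod 4 else if 4 dvd k then 3 else 1)"
proof -
  have "4 dvd k \<Longrightarrow> (k + c) mod 4 = 3"
    using assms(1) by (metis dvd_imp_mod_0 mod_add_left_eq add_0)
  moreover have "(k - 1) mod 4 = 1" if "\<not> 4 dvd k"
  proof -
    have "\<exists>q. k = 4 * q + 2" using assms(2) that by presburger
    then show ?thesis by auto
  qed
  ultimately show ?thesis by (simp add: diff_exp_def)
qed

lemma diff_exp_cong_imp_eq:
  assumes "4 dvd n" and "c mod 4 = 3"
    and k: "k < 2 * n" "even k" and k': "k' < 2 * n" "even k'"
    and cong: "[diff_exp n c k = diff_exp n c k'] (mod n)"
  shows "k = k'"
proof -
  have "[diff_exp n c k = diff_exp n c k'] (mod 4)"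
    using cong assms(1) by (rule cong_dvd_modulus_nat)
  moreover have "k mod 4 = 0 \<or> k mod 4 = 2" "k' mod 4 = 0 \<or> k' mod 4 = 2"
    using k(2) k'(2) by presburger+
  ultimately have same_half: "k < n \<longleftrightarrow> k' < n"
    and same_class: "n \<le> k \<Longrightarrow> 4 dvd k \<longleftrightarrow> 4 dvd k'"
    using diff_exp_mod_4[OF \<open>c mod 4 = 3\<close>] k(2) k'(2) unfolding cong_def
    by (auto split: if_splits)
  have "[k = k'] (mod n)"
  proof (cases "k < n")
    case True
    then show ?thesis using cong same_half by (simp add: diff_exp_def)
  next
    case False
    show ?thesis
    proof (cases "4 dvd k")
      case True
      then show ?thesis
        using cong same_half same_class False by (simp add: diff_exp_def cong_add_rcancel_nat)
    next
      case F: False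
      then have "k \<noteq> 0" "k' \<noteq> 0"
        using False same_class by (metis dvd_0_right not_less)+
      moreover have "[k - 1 = k' - 1] (mod n)"
        using cong same_half same_class False F by (simp add: diff_exp_def)
      ultimately show ?thesis
        using cong_add_rcancel_nat[of "k - 1" 1 "k' - 1" n] by simp
    qed
  qed
  show "k = k'"
  proof (cases "k < n")
    case True
    then show ?thesis using \<open>[k = k'] (mod n)\<close> same_half cong_less_modulus_unique_nat by blast
  next
    case False
    have "[(k - n) + n = (k' - n) + n] (mod n)"
      using \<open>[k = k'] (mod n)\<close> False same_half by simp
    then have "[k - n = k' - n] (mod n)"
      by (simp only: cong_add_rcancel_nat)
    moreover have "k - n < n" "k' - n < n"
      using k(1) k'(1) by auto
    ultimately have "k - n = k' - n"
      by (rule cong_less_modulus_unique_nat)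
    then show ?thesis using False same_half by simp
  qed
qed

context primroot_mod_prime
begin

lemma one_mod_8_facts:
  assumes "[p = 1] (mod 8)"
  shows "p - 1 = 2 * ((p - 1) div 2)" and "4 dvd (p - 1) div 2" and "odd p" and "3 < p"
proof -
  obtain q where "p - 1 = 8 * q"
    using cong_to_1_nat[OF assms] by blast
  moreover have "p \<noteq> 0" "p \<noteq> 1" using prime by auto
  ultimately have "p = 8 * q + 1" "q \<noteq> 0" by auto
  then show "p - 1 = 2 * ((p - 1) div 2)" "4 dvd (p - 1) div 2" "odd p" "3 < p"
    by simp_all
qed

lemma pow_diff_partner_exp:
  assumes "[p = 1] (mod 8)" and c: "[int a ^ c = int a ^ 2 - int a + 1] (mod int p)"
  defines "n \<equiv> (p - 1) div 2"
  shows "[int a ^ k - int a ^ partner_exp n k = (int a + 1) * int a ^ diff_exp n c k] (mod int p)"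
proof -
  have "4 dvd n" "odd p" using one_mod_8_facts[OF assms(1)] by (simp_all add: n_def)
  have shift: "[int a ^ s = - (int a ^ t)] (mod int p)" if "s = t + n \<or> s + n = t" for s t
  proof (cases "s = t + n")
    case True
    then show ?thesis using pow_add_half_cong[OF \<open>odd p\<close>, of t] by (simp add: n_def)
  next
    case False
    then have "[int a ^ t = - (int a ^ s)] (mod int p)"
      using that pow_add_half_cong[OF \<open>odd p\<close>, of s] by (simp add: n_def)
    then have "[- (int a ^ t) = int a ^ s] (mod int p)"
      by (metis cong_minus_minus_iff minus_minus)
    then show ?thesis by (rule cong_sym)
  qed
  consider "k < n" | "n \<le> k" "4 dvd k" | "n \<le> k" "\<not> 4 dvd k"
    by linarith
  then show ?thesis
  proof cases
    case 1
    then have "[int a ^ partner_exp n k = - (int a ^ (k + 1))] (mod int p)"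
      by (intro shift) (simp add: partner_exp_def)
    then have "[int a ^ k - int a ^ partner_exp n k = int a ^ k + int a ^ (k + 1)] (mod int p)"
      by (metis cong_diff cong_refl diff_minus_eq_add)
    then show ?thesis
      using 1 by (simp add: diff_exp_def algebra_simps)
  next
    case 2
    then have "[int a ^ partner_exp n k = - (int a ^ (k + 3))] (mod int p)"
      by (intro shift) (simp add: partner_exp_def)
    then have "[int a ^ k - int a ^ partner_exp n k = int a ^ k + int a ^ (k + 3)] (mod int p)"
      by (metis cong_diff cong_refl diff_minus_eq_add)
    also have "int a ^ k + int a ^ (k + 3) = (int a + 1) * int a ^ k * (int a ^ 2 - int a + 1)"
      by (simp add: algebra_simps power_add power2_eq_square power3_eq_cube)
    also have "[\<dots> = (int a + 1) * int a ^ k * int a ^ c] (mod int p)"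
      by (rule cong_mult[OF cong_refl cong_sym[OF c]])
    also have "(int a + 1) * int a ^ k * int a ^ c = (int a + 1) * int a ^ diff_exp n c k"
      using 2 by (simp add: diff_exp_def power_add mult.assoc)
    finally show ?thesis .
  next
    case 3
    then have "k \<noteq> n" using \<open>4 dvd n\<close> by auto
    then have "[int a ^ partner_exp n k = - (int a ^ (k - 1))] (mod int p)"
      using 3 by (intro shift) (simp add: partner_exp_def)
    then have "[int a ^ k - int a ^ partner_exp n k = int a ^ k + int a ^ (k - 1)] (mod int p)"
      by (metis cong_diff cong_refl diff_minus_eq_add)
    moreover have "k = Suc (k - 1)"
      using 3 by (metis dvd_0_right Suc_pred' not_gr0)
    then have "int a ^ k + int a ^ (k - 1) = (int a + 1) * int a ^ diff_exp n c k"
      using 3 by (simp add: diff_exp_def algebra_simps) (metis power_Suc)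
    ultimately show ?thesis by simp
  qed
qed

lemma bij_betw_partner_exp_even_odd:
  assumes "[p = 1] (mod 8)"
  shows "bij_betw (partner_exp ((p - 1) div 2)) {k. k < p - 1 \<and> even k} {l. l < p - 1 \<and> odd l}"
  using bij_betw_partner_exp one_mod_8_facts[OF assms] by metis

definition primroot_factor :: "nat option set set" where
  "primroot_factor = pair_factor (\<lambda>k. a ^ k mod p) (\<lambda>k. a ^ partner_exp ((p - 1) div 2) k mod p)
     {k. k < p - 1 \<and> even k}"

lemma is_one_factor_primroot_factor:
  assumes "[p = 1] (mod 8)"
  shows "is_one_factor p primroot_factor"
proof -
  define pw where "pw = (\<lambda>i. a ^ i mod p)"
  define partner where "partner = partner_exp ((p - 1) div 2)"
  define Evens where "Evens = {k. k < p - 1 \<and> even k}"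
  define Odds where "Odds = {l. l < p - 1 \<and> odd l}"
  have "Evens \<union> Odds = {..<p - 1}" and disjoint: "Evens \<inter> Odds = {}"
    unfolding Evens_def Odds_def by auto
  then have pw: "bij_betw pw (Evens \<union> Odds) {1..<p}"
    unfolding pw_def using bij_betw_pow_mod by simp
  then have pw_inj: "inj_on pw (Evens \<union> Odds)"
    by (rule bij_betw_imp_inj_on)
  have partner: "bij_betw partner Evens Odds"
    unfolding partner_def Evens_def Odds_def by (rule bij_betw_partner_exp_even_odd[OF assms])
  have partner_image: "(pw \<circ> partner) ` Evens = pw ` Odds"
    unfolding image_comp[symmetric] using bij_betw_imp_surj_on[OF partner] by simp
  have "is_one_factor p (pair_factor pw (pw \<circ> partner) Evens)"
  proof (rule is_one_factor_pair_factor)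
    show "0 < p" using prime by (simp add: prime_gt_0_nat)
    show "inj_on pw Evens"
      using pw_inj by (rule inj_on_subset) simp
    show "inj_on (pw \<circ> partner) Evens"
      using partner pw_inj by (metis bij_betw_def comp_inj_on inj_on_subset sup_ge2)
    show "pw ` Evens \<inter> (pw \<circ> partner) ` Evens = {}"
      using inj_on_image_Int[OF pw_inj Un_upper1 Un_upper2] partner_image disjoint by simp
    show "pw ` Evens \<union> (pw \<circ> partner) ` Evens = {1..<p}"
      using partner_image pw by (simp add: bij_betw_def flip: image_Un)
  qed
  then show ?thesis
    by (simp add: primroot_factor_def pw_def partner_def Evens_def comp_def)
qed

lemma qres_pow_mod_iff:
  assumes "odd p"
  shows "qres p (Some (a ^ k mod p)) \<longleftrightarrow> even k"
proof -
  have "[int (a ^ k mod p) = int a ^ k] (mod int p)"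
    by (simp add: cong_def of_nat_mod)
  then show ?thesis
    using QuadRes_pow_iff[OF assms] QuadRes_cong by (simp add: qres_def)
qed

lemma primroot_factor_joins_residues:
  assumes "[p = 1] (mod 8)"
  shows "\<forall>e \<in> primroot_factor. \<exists>x y. e = {x, y} \<and> qres p x \<and> \<not> qres p y"
  unfolding primroot_factor_def
proof (rule pair_factor_joins_residues)
  fix k assume "k \<in> {k. k < p - 1 \<and> even k}"
  then have "odd (partner_exp ((p - 1) div 2) k)"
    using bij_betw_apply[OF bij_betw_partner_exp_even_odd[OF assms]] by simp
  then show "qres p (Some (a ^ k mod p)) \<and> \<not> qres p (Some (a ^ partner_exp ((p - 1) div 2) k mod p))"
    using \<open>k \<in> _\<close> qres_pow_mod_iff one_mod_8_facts[OF assms] by simp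
qed

lemma pow_mod_ne_pow_partner_exp:
  assumes "[p = 1] (mod 8)" and "k < p - 1" and "even k"
  shows "a ^ k mod p \<noteq> a ^ partner_exp ((p - 1) div 2) k mod p"
proof -
  let ?l = "partner_exp ((p - 1) div 2) k"
  have "?l < p - 1" "odd ?l"
    using bij_betw_apply[OF bij_betw_partner_exp_even_odd[OF assms(1)]] assms(2,3) by simp_all
  then have "k \<noteq> ?l" "k \<in> {..<p - 1}" "?l \<in> {..<p - 1}"
    using assms(2,3) by auto
  then show ?thesis
    using inj_on_eq_iff[OF bij_betw_imp_inj_on[OF bij_betw_pow_mod]] by blast
qed

lemma inj_on_edge_len_primroot_factor:
  assumes "[p = 1] (mod 8)"
    and "c mod 4 = 3" and c: "[int a ^ c = int a ^ 2 - int a + 1] (mod int p)"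
  shows "inj_on (edge_len p) primroot_factor"
  unfolding primroot_factor_def
proof (rule inj_on_edge_len_pair_factor)
  let ?n = "(p - 1) div 2"
  note half = one_mod_8_facts[OF assms(1)]
  show "a ^ k mod p < p \<and> a ^ partner_exp ?n k mod p < p \<and> a ^ k mod p \<noteq> a ^ partner_exp ?n k mod p"
    if "k \<in> {k. k < p - 1 \<and> even k}" for k
    using pow_mod_ne_pow_partner_exp[OF assms(1)] that prime_gt_0_nat[OF prime] by simp
  show "[int (a ^ k mod p) - int (a ^ partner_exp ?n k mod p) = (int a + 1) * int a ^ diff_exp ?n c k] (mod int p)"
    for k
  proof -
    have "[int (a ^ k mod p) - int (a ^ partner_exp ?n k mod p) = int a ^ k - int a ^ partner_exp ?n k] (mod int p)"
      by (intro cong_diff) (simp_all add: cong_def of_nat_mod)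
    then show ?thesis
      using pow_diff_partner_exp[OF assms(1) c] by (rule cong_trans)
  qed
  fix k k' assume k: "k \<in> {k. k < p - 1 \<and> even k}" and k': "k' \<in> {k. k < p - 1 \<and> even k}"
  assume "[(int a + 1) * int a ^ diff_exp ?n c k = (int a + 1) * int a ^ diff_exp ?n c k'] (mod int p) \<or>
    [(int a + 1) * int a ^ diff_exp ?n c k = - ((int a + 1) * int a ^ diff_exp ?n c k')] (mod int p)"
  then have "[int a ^ diff_exp ?n c k = int a ^ diff_exp ?n c k'] (mod int p) \<or>
    [int a ^ diff_exp ?n c k = - (int a ^ diff_exp ?n c k')] (mod int p)"
    using cong_mult_lcancel[OF coprime_primroot_plus_one[OF half(4)]] by (metis mult_minus_right)
  then have "[diff_exp ?n c k = diff_exp ?n c k'] (mod ?n)"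
    using pow_cong_plus_minus_imp_cong[OF half(3)] by blast
  moreover have "k < 2 * ?n" "even k" "k' < 2 * ?n" "even k'"
    using k k' half(1) by (metis mem_Collect_eq)+
  ultimately show "k = k'"
    using diff_exp_cong_imp_eq[OF half(2) \<open>c mod 4 = 3\<close>] by blast
qed

end

theorem proposition2p1:
  fixes p a :: nat
  assumes "prime p" and "[p = 1] (mod 8)"
    and "residue_primroot p a"
    and "\<exists>x::int. \<not> int p dvd x \<and> [x ^ 4 = int a * (int a ^ 2 - int a + 1)] (mod int p)"
  shows "\<exists>F. is_one_factor p F \<and>
           (\<forall>e\<in>F. \<exists>u v. e = {u, v} \<and> qres p u \<and> \<not> qres p v) \<and>
           inj_on (edge_len p) F"
proof -
  interpret primroot_mod_prime p a
    using assms(1,3) by unfold_locales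
  obtain c where "c mod 4 = 3" "[int a ^ c = int a ^ 2 - int a + 1] (mod int p)"
    using assms(4) pow_3_mod_4_of_fourth_power by blast
  then show ?thesis
    using is_one_factor_primroot_factor primroot_factor_joins_residues
      inj_on_edge_len_primroot_factor assms(2) by blast
qed

end
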